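(* For every integer $d\ge0$ and every integer $a\ge\max(2,2d-1)$, there exists a constructible $6$-labeled graph $H_{d,a}$ in which half of the vertices have label $1$ and half have label $2$, such that (i) $|V(H_{d,a})|\le 8a^d-6$, and (ii) for every partial orientation $\vec{G}$ of $H_{d,a}$ of maximum outdegree less than $d$, there exist vertices $u$ and $v$ of labels $1$ and $2$ respectively, at distance exactly two in $H_{d,a}$, such that for every common neighbor $x$ of $u$ and $v$ we have $(u,x)\notin E(\vec{G})$ and $(v,x)\notin E(\vec{G})$.
   Context: All graphs are finite, simple and undirected. A partial orientation of a graph $G$ is a directed graph $\vec{G}$ on $V(G)$ such that every $(u,v)\in E(\vec{G})$ satisfies $uv\in E(G)$ (each edge may be directed in neither, one, or both directions). A $k$-labeled graph is a graph in which each vertex receives a label from $[k]$ (labels may repeat, not all need be used). The constructible $k$-labeled graphs are the smallest family such that: every one-vertex $k$-labeled graph is constructible; the disjoint union of at least two constructible $k$-labeled graphs is constructible; if $G'$ is constructible and $i,j\in[k]$, the graph obtained by changing all labels $i$ to $j$ is constructible; and if $G'$ is constructible and $i,j\in[k]$, the graph obtained by adding all edges between vertices with labels $i$ and $j$ is constructible. *)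

theory Defs
  imports Main
begin

text \<open>A k-labeled graph is a triple (V, E, lab): a finite vertex set V of naturals,
 a symmetric irreflexive edge relation E \<subseteq> V \<times> V (as a set of ordered pairs),
 and a labelling lab (only its values on V matter).\<close>

definition add_label_edges :: "nat set \<Rightarrow> (nat \<times> nat) set \<Rightarrow> (nat \<Rightarrow> nat) \<Rightarrow> nat \<Rightarrow> nat \<Rightarrow> (nat \<times> nat) set" where
  "add_label_edges V E lab i j = E \<union> {(u, v). u \<in> V \<and> v \<in> V \<and> u \<noteq> v \<and>
      ((lab u = i \<and> lab v = j) \<or> (lab u = j \<and> lab v = i))}"

definition relabel :: "(nat \<Rightarrow> nat) \<Rightarrow> nat \<Rightarrow> nat \<Rightarrow> nat \<Rightarrow> nat" where
  "relabel lab i j = (\<lambda>v. if lab v = i then j else lab v)"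

inductive constructible :: "nat \<Rightarrow> nat set \<Rightarrow> (nat \<times> nat) set \<Rightarrow> (nat \<Rightarrow> nat) \<Rightarrow> bool"
  for k :: nat where
  single: "lab v \<in> {1..k} \<Longrightarrow> constructible k {v} {} lab"
| union: "constructible k V1 E1 lab1 \<Longrightarrow> constructible k V2 E2 lab2 \<Longrightarrow> V1 \<inter> V2 = {} \<Longrightarrow>
          constructible k (V1 \<union> V2) (E1 \<union> E2) (\<lambda>x. if x \<in> V1 then lab1 x else lab2 x)"
| relab: "constructible k V E lab \<Longrightarrow> i \<in> {1..k} \<Longrightarrow> j \<in> {1..k} \<Longrightarrow>
          constructible k V E (relabel lab i j)"
| join: "constructible k V E lab \<Longrightarrow> i \<in> {1..k} \<Longrightarrow> j \<in> {1..k} \<Longrightarrow>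
          constructible k V (add_label_edges V E lab i j) lab"
| iso: "constructible k V E lab \<Longrightarrow> bij_betw f V V' \<Longrightarrow>
          E' = (\<lambda>(a, b). (f a, f b)) ` E \<Longrightarrow> (\<forall>v\<in>V. lab' (f v) = lab v) \<Longrightarrow>
          constructible k V' E' lab'"

text \<open>Partial orientation: any set of directed pairs along edges (both directions allowed).\<close>
definition partial_orientation :: "(nat \<times> nat) set \<Rightarrow> (nat \<times> nat) set \<Rightarrow> bool" where
  "partial_orientation E D \<longleftrightarrow> D \<subseteq> E"

definition outdeg :: "(nat \<times> nat) set \<Rightarrow> nat \<Rightarrow> nat" where
  "outdeg D u = card {x. (u, x) \<in> D}"

definition common_nbrs :: "(nat \<times> nat) set \<Rightarrow> nat \<Rightarrow> nat \<Rightarrow> nat set" where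
  "common_nbrs E u v = {x. (u, x) \<in> E \<and> (v, x) \<in> E}"

definition dist_two :: "(nat \<times> nat) set \<Rightarrow> nat \<Rightarrow> nat \<Rightarrow> bool" where
  "dist_two E u v \<longleftrightarrow> u \<noteq> v \<and> (u, v) \<notin> E \<and> common_nbrs E u v \<noteq> {}"

end

theory Submission
  imports Defs "HOL-Library.Nat_Bijection" "HOL-Library.Disjoint_Sets"
begin

text \<open>
  Induction on \<open>d\<close>. \<open>H 0\<close> is a vertex of label 1 and a vertex of label 2. \<open>H (d + 1)\<close> consists of
  \<open>a\<close> disjoint copies of \<open>H d\<close>; the \<open>i\<close>-th copy gets a hub \<open>x\<^sub>i\<close> of label 1 joined to its
  label-2 vertices and a hub \<open>y\<^sub>i\<close> of label 2 joined to its label-1 vertices, and two roots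
  \<open>r\<close> (label 1) and \<open>s\<close> (label 2) are joined to all \<open>x\<^sub>i\<close> resp. all \<open>y\<^sub>i\<close>. This gives
  \<open>|H (d + 1)| = a |H d| + 2a + 2\<close>.

  Given an orientation of outdegree at most \<open>d\<close>, the roots enter at most \<open>2d < a\<close> hubs, so for
  some \<open>i\<close> neither \<open>r \<rightarrow> x\<^sub>i\<close> nor \<open>s \<rightarrow> y\<^sub>i\<close> is present. If some label-2 vertex \<open>v\<close> of copy \<open>i\<close>
  does not enter \<open>x\<^sub>i\<close>, the pair \<open>(r, v)\<close> with unique common neighbour \<open>x\<^sub>i\<close> is free, and
  symmetrically for \<open>s\<close>. Otherwise every vertex of copy \<open>i\<close> spends one out-edge on a hub, so the
  orientation restricted to the copy has outdegree less than \<open>d\<close> and induction applies.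
\<close>

definition star_edges :: "nat \<Rightarrow> nat set \<Rightarrow> (nat \<times> nat) set" where
  "star_edges w S = {w} \<times> S \<union> S \<times> {w}"

lemma constructible_finite:
  "constructible k V E lab \<Longrightarrow> finite V \<and> finite E"
proof (induction rule: constructible.induct)
  case (join V E lab i j)
  have "add_label_edges V E lab i j \<subseteq> E \<union> V \<times> V"
    by (auto simp: add_label_edges_def)
  with join show ?case by (meson finite_SigmaI finite_UnI finite_subset)
next
  case (iso V E lab f V' E' lab')
  then show ?case by (auto dest: bij_betw_finite)
qed auto

lemma constructible_cong:
  assumes "constructible k V E lab" and "\<forall>v\<in>V. lab' v = lab v"
  shows "constructible k V E lab'"
  by (rule constructible.iso[OF assms(1), of id]) (use assms(2) in auto)

lemma constructible_add_vertex:
  assumes c: "constructible k V E lab" and w: "w \<notin> V" and ij: "i \<in> {1..k}" "j \<in> {1..k}"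
    and fresh: "\<forall>v\<in>V. lab v \<noteq> i"
  shows "constructible k (insert w V) (E \<union> star_edges w {v \<in> V. lab v = j}) (lab(w := i))"
proof -
  have "constructible k {w} {} (lab(w := i))"
    by (rule constructible.single) (use ij in simp)
  from constructible.union[OF c this] w
  have "constructible k (insert w V) E (lab(w := i))"
    by (auto simp: insert_commute intro: constructible_cong)
  moreover have "add_label_edges (insert w V) E (lab(w := i)) i j = E \<union> star_edges w {v \<in> V. lab v = j}"
    using w fresh by (auto simp: add_label_edges_def star_edges_def split: if_splits)
  ultimately show ?thesis
    using constructible.join[OF _ ij] by metis
qed

lemma constructible_UN:
  assumes "finite I" and "I \<noteq> {}" and "\<forall>i\<in>I. constructible k (VV i) (EE i) lab"
    and "disjoint_family_on VV I"
  shows "constructible k (\<Union>i\<in>I. VV i) (\<Union>i\<in>I. EE i) lab"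
  using assms
proof (induction I rule: finite_ne_induct)
  case (insert i I)
  have "constructible k (\<Union>j\<in>I. VV j) (\<Union>j\<in>I. EE j) lab"
    using insert by (auto intro: disjoint_family_on_mono)
  moreover have "(\<Union>j\<in>I. VV j) \<inter> VV i = {}"
    using insert by (auto simp: disjoint_family_on_def)
  ultimately have "constructible k ((\<Union>j\<in>I. VV j) \<union> VV i) ((\<Union>j\<in>I. EE j) \<union> EE i) lab"
    using constructible.union[of k _ _ lab "VV i" "EE i" lab] insert.prems by simp
  then show ?case
    by (simp add: Un_commute)
qed simp

definition free_pair :: "(nat \<times> nat) set \<Rightarrow> (nat \<times> nat) set \<Rightarrow> nat \<Rightarrow> nat \<Rightarrow> bool" where
  "free_pair E D u v \<longleftrightarrow> dist_two E u v \<and> (\<forall>x\<in>common_nbrs E u v. (u, x) \<notin> D \<and> (v, x) \<notin> D)"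

definition forces_free_pair :: "nat \<Rightarrow> nat set \<Rightarrow> (nat \<times> nat) set \<Rightarrow> (nat \<Rightarrow> nat) \<Rightarrow> bool" where
  "forces_free_pair d V E lab \<longleftrightarrow> (\<forall>D. partial_orientation E D \<and> (\<forall>u\<in>V. outdeg D u < d) \<longrightarrow>
     (\<exists>u\<in>V. \<exists>v\<in>V. lab u = 1 \<and> lab v = 2 \<and> free_pair E D u v))"

lemma free_pair_if_unique_common_nbr:
  assumes "u \<noteq> v" "(u, v) \<notin> E" "common_nbrs E u v = {x}" "(u, x) \<notin> D" "(v, x) \<notin> D"
  shows "free_pair E D u v"
  using assms by (simp add: free_pair_def dist_two_def)

lemma card_le_outdeg:
  assumes "inj_on f I" and "finite {y. (u, y) \<in> D}"
  shows "card {i \<in> I. (u, f i) \<in> D} \<le> outdeg D u"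
proof -
  have "card {i \<in> I. (u, f i) \<in> D} = card (f ` {i \<in> I. (u, f i) \<in> D})"
    using assms(1) by (simp add: card_image inj_on_def)
  also have "\<dots> \<le> outdeg D u"
    unfolding outdeg_def by (rule card_mono[OF assms(2)]) auto
  finally show ?thesis .
qed

lemma outdeg_pullback_less:
  assumes "inj f" and "finite {y. (f u, y) \<in> D}" and "(f u, z) \<in> D" and "z \<notin> range f"
  shows "outdeg {(u, w). (u, w) \<in> E \<and> (f u, f w) \<in> D} u < outdeg D (f u)"
proof -
  let ?N = "{y. (f u, y) \<in> D}"
  have "outdeg {(u, w). (u, w) \<in> E \<and> (f u, f w) \<in> D} u = card (f ` {w. (u, w) \<in> E \<and> (f u, f w) \<in> D})"
    using assms(1) by (simp add: outdeg_def card_image inj_on_def inj_def)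
  also have "\<dots> \<le> card (?N - {z})"
    by (rule card_mono) (use assms in auto)
  also have "\<dots> < card ?N"
    by (rule card_Diff1_less) (use assms(2,3) in auto)
  finally show ?thesis
    by (simp add: outdeg_def)
qed

lemma finite_out_nbrs:
  assumes "partial_orientation E D" and "finite E"
  shows "finite {y. (u, y) \<in> D}"
proof (rule finite_subset)
  show "{y. (u, y) \<in> D} \<subseteq> snd ` E"
    using assms(1) by (force simp: partial_orientation_def)
qed (use assms(2) in simp)

lemma exists_index_avoiding_out_edges:
  assumes "inj f" "inj g" and "finite {y. (r, y) \<in> D}" "finite {y. (s, y) \<in> D}"
    and "outdeg D r \<le> d" "outdeg D s \<le> d" and "2 * d < a"
  shows "\<exists>i<a. (r, f i) \<notin> D \<and> (s, g i) \<notin> D"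
proof -
  let ?A = "{i \<in> {..<a}. (r, f i) \<in> D}" and ?B = "{i \<in> {..<a}. (s, g i) \<in> D}"
  have "card (?A \<union> ?B) \<le> card ?A + card ?B"
    by (rule card_Un_le)
  also have "\<dots> \<le> outdeg D r + outdeg D s"
    using card_le_outdeg[OF inj_on_subset[OF assms(1) subset_UNIV] assms(3)]
      card_le_outdeg[OF inj_on_subset[OF assms(2) subset_UNIV] assms(4)] by (rule add_mono)
  also have "\<dots> < card {..<a}"
    using assms(5-7) by simp
  finally have "card (?A \<union> ?B) < card {..<a}" .
  then have "\<not> {..<a} \<subseteq> ?A \<union> ?B"
    using card_mono[of "?A \<union> ?B" "{..<a}"] by auto
  then show ?thesis
    by auto
qed

text \<open>\<open>hub 1 i\<close>, \<open>hub 2 i\<close>, \<open>root 1\<close>, \<open>root 2\<close> are \<open>x\<^sub>i\<close>, \<open>y\<^sub>i\<close>, \<open>r\<close>, \<open>s\<close> above; the first index of a hub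
  or root is also its label in \<open>H (d + 1)\<close>.\<close>

definition copy_vertex :: "nat \<Rightarrow> nat \<Rightarrow> nat" where
  "copy_vertex i v = prod_encode (0, prod_encode (i, v))"

definition hub :: "nat \<Rightarrow> nat \<Rightarrow> nat" where
  "hub j i = prod_encode (1, prod_encode (j, i))"

definition root :: "nat \<Rightarrow> nat" where
  "root j = prod_encode (2, j)"

lemma vertex_codes_eq_iff [simp]:
  "copy_vertex i v = copy_vertex i' v' \<longleftrightarrow> i = i' \<and> v = v'"
  "hub j i = hub j' i' \<longleftrightarrow> j = j' \<and> i = i'"
  "root j = root j' \<longleftrightarrow> j = j'"
  "copy_vertex i v \<noteq> hub j i'" "hub j i' \<noteq> copy_vertex i v"
  "copy_vertex i v \<noteq> root j" "root j \<noteq> copy_vertex i v"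
  "hub j i \<noteq> root j'" "root j' \<noteq> hub j i"
  by (auto simp: copy_vertex_def hub_def root_def)

definition step_label :: "(nat \<Rightarrow> nat) \<Rightarrow> nat \<Rightarrow> nat" where
  "step_label lab w = (let (t, c) = prod_decode w in
     if t = 0 then lab (snd (prod_decode c)) else if t = 1 then fst (prod_decode c) else c)"

lemma step_label_simps [simp]:
  "step_label lab (copy_vertex i v) = lab v"
  "step_label lab (hub j i) = j"
  "step_label lab (root j) = j"
  by (simp_all add: step_label_def copy_vertex_def hub_def root_def)

definition gadget_vertices :: "nat set \<Rightarrow> nat \<Rightarrow> nat set" where
  "gadget_vertices V i = insert (hub 2 i) (insert (hub 1 i) (copy_vertex i ` V))"

definition gadget_edges :: "nat set \<Rightarrow> (nat \<times> nat) set \<Rightarrow> (nat \<Rightarrow> nat) \<Rightarrow> nat \<Rightarrow> (nat \<times> nat) set" where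
  "gadget_edges V E lab i = (\<lambda>(u, w). (copy_vertex i u, copy_vertex i w)) ` E
     \<union> star_edges (hub 1 i) (copy_vertex i ` {v \<in> V. lab v = 2})
     \<union> star_edges (hub 2 i) (copy_vertex i ` {v \<in> V. lab v = 1})"

definition step_vertices :: "nat \<Rightarrow> nat set \<Rightarrow> nat set" where
  "step_vertices a V = insert (root 2) (insert (root 1) (\<Union>i<a. gadget_vertices V i))"

definition step_edges :: "nat \<Rightarrow> nat set \<Rightarrow> (nat \<times> nat) set \<Rightarrow> (nat \<Rightarrow> nat) \<Rightarrow> (nat \<times> nat) set" where
  "step_edges a V E lab = (\<Union>i<a. gadget_edges V E lab i)
     \<union> star_edges (root 1) (hub 1 ` {..<a}) \<union> star_edges (root 2) (hub 2 ` {..<a})"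

lemma constructible_gadget:
  assumes c: "constructible 6 V E lab" and labels: "\<forall>v\<in>V. lab v \<in> {1, 2}"
    and L: "L (hub 1 i) = 3" "L (hub 2 i) = 4" "\<forall>v\<in>V. L (copy_vertex i v) = lab v + 4"
  shows "constructible 6 (gadget_vertices V i) (gadget_edges V E lab i) L"
proof -
  let ?C = "copy_vertex i ` V" and ?lab1 = "(step_label lab)(hub 1 i := 3)"
  have copies_labelled: "{w \<in> ?C. step_label lab w = j} = copy_vertex i ` {v \<in> V. lab v = j}"
    "{w \<in> insert (hub 1 i) ?C. ?lab1 w = 1} = copy_vertex i ` {v \<in> V. lab v = 1}" for j
    by auto
  have "constructible 6 ?C ((\<lambda>(u, w). (copy_vertex i u, copy_vertex i w)) ` E) (step_label lab)"
    by (rule constructible.iso[OF c]) (auto simp: bij_betw_def inj_on_def)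
  then have "constructible 6 (insert (hub 1 i) ?C)
     ((\<lambda>(u, w). (copy_vertex i u, copy_vertex i w)) ` E
        \<union> star_edges (hub 1 i) (copy_vertex i ` {v \<in> V. lab v = 2})) ?lab1"
    unfolding copies_labelled(1)[symmetric]
    by (rule constructible_add_vertex) (use labels in auto)
  then have "constructible 6 (gadget_vertices V i) (gadget_edges V E lab i) (?lab1(hub 2 i := 4))"
    unfolding gadget_vertices_def gadget_edges_def copies_labelled(2)[symmetric]
    by (rule constructible_add_vertex) (use labels in auto)
  from constructible.relab[OF constructible.relab[OF this, of 1 5], of 2 6]
  show ?thesis
    by (rule constructible_cong) (use L labels in \<open>auto simp: gadget_vertices_def relabel_def\<close>)
qed

lemma constructible_step:
  assumes c: "constructible 6 V E lab" and labels: "\<forall>v\<in>V. lab v \<in> {1, 2}" and "a \<ge> 1"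
  shows "constructible 6 (step_vertices a V) (step_edges a V E lab) (step_label lab)"
proof -
  \<comment> \<open>Temporary labels 3, 4 on the hubs and 5, 6 on the copies keep 1 and 2 free for the roots,
    which are then joined to the hubs by label.\<close>
  define L where "L w = (if w \<in> range (hub 1) then 3 else if w \<in> range (hub 2) then 4
    else step_label lab w + 4)" for w
  let ?G = "\<Union>i<a. gadget_vertices V i" and ?L1 = "L(root 1 := 1)"
  have hubs: "{w \<in> ?G. L w = 3} = hub 1 ` {..<a}" "{w \<in> insert (root 1) ?G. ?L1 w = 4} = hub 2 ` {..<a}"
    using labels by (auto simp: L_def gadget_vertices_def)
  have "constructible 6 ?G (\<Union>i<a. gadget_edges V E lab i) L"
  proof (rule constructible_UN)
    show "\<forall>i\<in>{..<a}. constructible 6 (gadget_vertices V i) (gadget_edges V E lab i) L"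
      by (intro ballI constructible_gadget[OF c labels]) (auto simp: L_def)
    show "disjoint_family_on (gadget_vertices V) {..<a}"
      by (auto simp: disjoint_family_on_def gadget_vertices_def)
  qed (use \<open>a \<ge> 1\<close> in \<open>auto simp: lessThan_empty_iff\<close>)
  then have "constructible 6 (insert (root 1) ?G)
      ((\<Union>i<a. gadget_edges V E lab i) \<union> star_edges (root 1) (hub 1 ` {..<a})) ?L1"
    unfolding hubs(1)[symmetric]
    by (rule constructible_add_vertex) (auto simp: L_def gadget_vertices_def)
  then have "constructible 6 (step_vertices a V) (step_edges a V E lab) (?L1(root 2 := 2))"
    unfolding step_vertices_def step_edges_def hubs(2)[symmetric]
    by (rule constructible_add_vertex) (auto simp: L_def gadget_vertices_def)
  from constructible.relab[OF constructible.relab[OF constructible.relab[OF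
        constructible.relab[OF this, of 3 1], of 4 2], of 5 1], of 6 2]
  show ?thesis
    by (rule constructible_cong)
      (use labels in \<open>auto simp: L_def relabel_def step_vertices_def gadget_vertices_def\<close>)
qed

lemma step_vertices_eq:
  "step_vertices a V = (\<lambda>(i, v). copy_vertex i v) ` ({..<a} \<times> V)
     \<union> hub 1 ` {..<a} \<union> hub 2 ` {..<a} \<union> {root 1, root 2}"
  by (auto simp: step_vertices_def gadget_vertices_def)

lemma card_copies:
  "finite V \<Longrightarrow> card ((\<lambda>(i, v). copy_vertex i v) ` ({..<a} \<times> V)) = a * card V"
  by (subst card_image) (auto simp: inj_on_def card_cartesian_product)

lemma card_step_vertices:
  assumes "finite V"
  shows "card (step_vertices a V) = a * card V + 2 * a + 2"
proof -
  have "card (step_vertices a V) = card ((\<lambda>(i, v). copy_vertex i v) ` ({..<a} \<times> V))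
      + card (hub 1 ` {..<a}) + card (hub 2 ` {..<a}) + card {root 1, root 2}"
    unfolding step_vertices_eq by (subst card_Un_disjoint, use assms in auto)+
  then show ?thesis
    using assms by (simp add: card_copies card_image inj_on_def)
qed

lemma card_step_label_class:
  assumes "finite V" and "j \<in> {1, 2}"
  shows "card {w \<in> step_vertices a V. step_label lab w = j} = a * card {v \<in> V. lab v = j} + a + 1"
proof -
  have "{w \<in> step_vertices a V. step_label lab w = j}
      = (\<lambda>(i, v). copy_vertex i v) ` ({..<a} \<times> {v \<in> V. lab v = j}) \<union> hub j ` {..<a} \<union> {root j}"
    using assms(2) unfolding step_vertices_eq by auto
  also have "card \<dots> = card ((\<lambda>(i, v). copy_vertex i v) ` ({..<a} \<times> {v \<in> V. lab v = j}))
      + card (hub j ` {..<a}) + card {root j}"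
    by (subst card_Un_disjoint, use assms in auto)+
  finally show ?thesis
    using assms(1) by (simp add: card_copies card_image inj_on_def)
qed

lemma mem_step_vertices [simp]:
  "copy_vertex i v \<in> step_vertices a V \<longleftrightarrow> i < a \<and> v \<in> V"
  "root j \<in> step_vertices a V \<longleftrightarrow> j \<in> {1, 2}"
  by (auto simp: step_vertices_eq)

lemma step_label_range:
  "\<forall>v\<in>V. lab v \<in> {1, 2} \<Longrightarrow> \<forall>w\<in>step_vertices a V. step_label lab w \<in> {1, 2}"
  unfolding step_vertices_eq by auto

lemma finite_step_edges:
  "finite V \<Longrightarrow> finite E \<Longrightarrow> finite (step_edges a V E lab)"
  by (simp add: step_edges_def gadget_edges_def star_edges_def)

lemma step_edges_root:
  "j \<in> {1, 2} \<Longrightarrow> (root j, y) \<in> step_edges a V E lab \<longleftrightarrow> y \<in> hub j ` {..<a}"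
  by (auto simp: step_edges_def gadget_edges_def star_edges_def)

lemma step_edges_copy_vertex:
  assumes "i < a"
  shows "(copy_vertex i u, y) \<in> step_edges a V E lab \<longleftrightarrow>
    (\<exists>w. y = copy_vertex i w \<and> (u, w) \<in> E) \<or> (y = hub 1 i \<and> u \<in> V \<and> lab u = 2)
      \<or> (y = hub 2 i \<and> u \<in> V \<and> lab u = 1)"
  using assms by (auto simp: step_edges_def gadget_edges_def star_edges_def)

lemma free_pair_root_copy_vertex:
  assumes "i < a" "v \<in> V" "lab v = 2" "(root 1, hub 1 i) \<notin> D" "(copy_vertex i v, hub 1 i) \<notin> D"
  shows "free_pair (step_edges a V E lab) D (root 1) (copy_vertex i v)"
proof (rule free_pair_if_unique_common_nbr)
  show "common_nbrs (step_edges a V E lab) (root 1) (copy_vertex i v) = {hub 1 i}"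
    using assms by (auto simp: common_nbrs_def step_edges_root step_edges_copy_vertex)
qed (use assms in \<open>auto simp: step_edges_root\<close>)

lemma free_pair_copy_vertex_root:
  assumes "i < a" "u \<in> V" "lab u = 1" "(root 2, hub 2 i) \<notin> D" "(copy_vertex i u, hub 2 i) \<notin> D"
  shows "free_pair (step_edges a V E lab) D (copy_vertex i u) (root 2)"
proof (rule free_pair_if_unique_common_nbr)
  show "common_nbrs (step_edges a V E lab) (copy_vertex i u) (root 2) = {hub 2 i}"
    using assms by (auto simp: common_nbrs_def step_edges_root step_edges_copy_vertex)
qed (use assms in \<open>auto simp: step_edges_copy_vertex\<close>)

lemma free_pair_copy_vertices:
  assumes "i < a" "lab u = 1" "lab v = 2"
    and "free_pair E {(u, w). (u, w) \<in> E \<and> (copy_vertex i u, copy_vertex i w) \<in> D} u v"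
  shows "free_pair (step_edges a V E lab) D (copy_vertex i u) (copy_vertex i v)"
proof -
  have "common_nbrs (step_edges a V E lab) (copy_vertex i u) (copy_vertex i v)
      = copy_vertex i ` common_nbrs E u v"
    using assms(1-3) by (auto simp: common_nbrs_def step_edges_copy_vertex)
  with assms show ?thesis
    by (auto simp: free_pair_def dist_two_def common_nbrs_def step_edges_copy_vertex)
qed

lemma gadget_out_edge_cases:
  assumes labels: "\<forall>v\<in>V. lab v \<in> {1, 2}"
  obtains v where "v \<in> V" "lab v = 2" "(copy_vertex i v, hub 1 i) \<notin> D"
    | u where "u \<in> V" "lab u = 1" "(copy_vertex i u, hub 2 i) \<notin> D"
    | "\<forall>u\<in>V. \<exists>z. z \<notin> range (copy_vertex i) \<and> (copy_vertex i u, z) \<in> D"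
proof -
  have "\<exists>z. z \<notin> range (copy_vertex i) \<and> (copy_vertex i u, z) \<in> D"
    if "u \<in> V" "\<forall>v\<in>V. lab v = 2 \<longrightarrow> (copy_vertex i v, hub 1 i) \<in> D"
      "\<forall>v\<in>V. lab v = 1 \<longrightarrow> (copy_vertex i v, hub 2 i) \<in> D" for u
  proof (cases "lab u = 1")
    case True
    then show ?thesis
      using that by (intro exI[of _ "hub 2 i"]) auto
  next
    case False
    then have "lab u = 2"
      using labels \<open>u \<in> V\<close> by auto
    then show ?thesis
      using that by (intro exI[of _ "hub 1 i"]) auto
  qed
  then show thesis
    using that by blast
qed

lemma free_pair_in_gadget:
  assumes forces: "forces_free_pair d V E lab" and "i < a"
    and fin_out: "\<And>u. finite {y. (copy_vertex i u, y) \<in> D}"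
    and outdeg: "\<forall>u\<in>V. outdeg D (copy_vertex i u) \<le> d"
    and entered: "\<forall>u\<in>V. \<exists>z. z \<notin> range (copy_vertex i) \<and> (copy_vertex i u, z) \<in> D"
  obtains u v where "u \<in> V" "v \<in> V" "lab u = 1" "lab v = 2"
    "free_pair (step_edges a V E lab) D (copy_vertex i u) (copy_vertex i v)"
proof -
  let ?D = "{(u, w). (u, w) \<in> E \<and> (copy_vertex i u, copy_vertex i w) \<in> D}"
  have "\<forall>u\<in>V. outdeg ?D u < d"
  proof
    fix u assume "u \<in> V"
    then obtain z where z: "z \<notin> range (copy_vertex i)" "(copy_vertex i u, z) \<in> D"
      using entered by blast
    have "outdeg ?D u < outdeg D (copy_vertex i u)"
      by (rule outdeg_pullback_less[OF _ fin_out z(2,1)]) (simp add: inj_def)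
    with outdeg \<open>u \<in> V\<close> show "outdeg ?D u < d"
      by fastforce
  qed
  moreover have "partial_orientation E ?D"
    by (auto simp: partial_orientation_def)
  ultimately obtain u v where "u \<in> V" "v \<in> V" "lab u = 1" "lab v = 2" "free_pair E ?D u v"
    using forces unfolding forces_free_pair_def by blast
  with free_pair_copy_vertices[OF \<open>i < a\<close>] show thesis
    using that by blast
qed

lemma forces_free_pair_step:
  assumes forces: "forces_free_pair d V E lab" and fin: "finite V" "finite E"
    and labels: "\<forall>v\<in>V. lab v \<in> {1, 2}" and "2 * d < a"
  shows "forces_free_pair (Suc d) (step_vertices a V) (step_edges a V E lab) (step_label lab)"
  unfolding forces_free_pair_def
proof (intro allI impI, elim conjE)
  fix D
  assume orientation: "partial_orientation (step_edges a V E lab) D"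
    and outdeg: "\<forall>w\<in>step_vertices a V. outdeg D w < Suc d"
  have fin_out: "finite {y. (w, y) \<in> D}" for w
    by (rule finite_out_nbrs[OF orientation finite_step_edges[OF fin]])
  have root_outdeg: "outdeg D (root 1) \<le> d" "outdeg D (root 2) \<le> d"
    using outdeg by (auto simp: less_Suc_eq_le)
  have "\<exists>i<a. (root 1, hub 1 i) \<notin> D \<and> (root 2, hub 2 i) \<notin> D"
    by (rule exists_index_avoiding_out_edges[OF _ _ fin_out fin_out root_outdeg \<open>2 * d < a\<close>])
      (simp_all add: inj_def)
  then obtain i where i: "i < a" "(root 1, hub 1 i) \<notin> D" "(root 2, hub 2 i) \<notin> D"
    by blast
  show "\<exists>u\<in>step_vertices a V. \<exists>v\<in>step_vertices a V. step_label lab u = 1 \<and> step_label lab v = 2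
      \<and> free_pair (step_edges a V E lab) D u v"
  proof (rule gadget_out_edge_cases[OF labels, of i D])
    fix v assume "v \<in> V" "lab v = 2" "(copy_vertex i v, hub 1 i) \<notin> D"
    with free_pair_root_copy_vertex[OF i(1) _ _ i(2)] i(1) show ?thesis
      by (intro bexI[of _ "root 1"] bexI[of _ "copy_vertex i v"]) auto
  next
    fix u assume "u \<in> V" "lab u = 1" "(copy_vertex i u, hub 2 i) \<notin> D"
    with free_pair_copy_vertex_root[OF i(1) _ _ i(3)] i(1) show ?thesis
      by (intro bexI[of _ "copy_vertex i u"] bexI[of _ "root 2"]) auto
  next
    assume hubs_entered: "\<forall>u\<in>V. \<exists>z. z \<notin> range (copy_vertex i) \<and> (copy_vertex i u, z) \<in> D"
    have "\<forall>u\<in>V. outdeg D (copy_vertex i u) \<le> d"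
      using outdeg i(1) by (auto simp: less_Suc_eq_le)
    from free_pair_in_gadget[OF forces i(1) fin_out this hubs_entered] i(1) show ?thesis
      by (metis mem_step_vertices(1) step_label_simps(1))
  qed
qed

lemma step_size_bound:
  fixes a n d :: nat
  assumes "a \<ge> 2" and "int n \<le> 8 * int a ^ d - 6"
  shows "int (a * n + 2 * a + 2) \<le> 8 * int a ^ Suc d - 6"
proof -
  have "int (a * n + 2 * a + 2) \<le> int a * (8 * int a ^ d - 6) + 2 * int a + 2"
    using mult_left_mono[OF assms(2), of "int a"] by simp
  also have "\<dots> = 8 * int a ^ Suc d - 4 * int a + 2"
    by (simp add: algebra_simps)
  also have "\<dots> \<le> 8 * int a ^ Suc d - 6"
    using assms(1) by simp
  finally show ?thesis .
qed

lemma balanced_construction_exists: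
  assumes "a \<ge> 2" and "2 * d \<le> a + 1"
  shows "\<exists>V E lab. constructible 6 V E lab \<and> (\<forall>v\<in>V. lab v \<in> {1, 2}) \<and>
    2 * card {v \<in> V. lab v = 1} = card V \<and> 2 * card {v \<in> V. lab v = 2} = card V \<and>
    int (card V) \<le> 8 * int a ^ d - 6 \<and> forces_free_pair d V E lab"
  using assms(2)
proof (induction d)
  case 0
  define lab :: "nat \<Rightarrow> nat" where "lab v = (if v = 0 then 1 else 2)" for v
  have "constructible 6 ({0} \<union> {1}) ({} \<union> {}) (\<lambda>x. if x \<in> {0} then lab x else lab x)"
    by (intro constructible.union constructible.single) (auto simp: lab_def)
  then have "constructible 6 {0, 1} {} lab"
    by (simp add: insert_commute)
  moreover have "\<forall>v\<in>{0, 1}. lab v \<in> {1, 2}"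
    by (simp add: lab_def)
  moreover have "{v \<in> {0, 1}. lab v = 1} = {0}" "{v \<in> {0, 1}. lab v = 2} = {1}"
    by (auto simp: lab_def)
  moreover have "forces_free_pair 0 {0, 1} {} lab"
    by (auto simp: forces_free_pair_def)
  ultimately show ?case
    by (intro exI[of _ "{0, 1}"] exI[of _ "{}"] exI[of _ lab]) simp
next
  case (Suc d)
  then obtain V E lab where c: "constructible 6 V E lab" and labels: "\<forall>v\<in>V. lab v \<in> {1, 2}"
    and half: "2 * card {v \<in> V. lab v = 1} = card V" "2 * card {v \<in> V. lab v = 2} = card V"
    and size: "int (card V) \<le> 8 * int a ^ d - 6" and forces: "forces_free_pair d V E lab"
    by auto
  have fin: "finite V" "finite E"
    using constructible_finite[OF c] by auto
  have "2 * card {w \<in> step_vertices a V. step_label lab w = j} = card (step_vertices a V)"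
    if "j \<in> {1, 2}" for j
    using half that card_step_label_class[OF fin(1) that] card_step_vertices[OF fin(1)]
    by (auto simp: algebra_simps)
  moreover have "int (card (step_vertices a V)) \<le> 8 * int a ^ Suc d - 6"
    using step_size_bound[OF assms(1) size] by (simp add: card_step_vertices[OF fin(1)])
  ultimately show ?case
    using constructible_step[OF c labels] step_label_range[OF labels]
      forces_free_pair_step[OF forces fin labels] assms(1) Suc.prems
    by (intro exI[of _ "step_vertices a V"] exI[of _ "step_edges a V E lab"] exI[of _ "step_label lab"])
      simp
qed

theorem lemma32:
  fixes d a :: nat
  assumes "a \<ge> 2" and "a \<ge> 2 * d - 1"
  shows "\<exists>V E lab. constructible 6 V E lab \<and>
           2 * card {v \<in> V. lab v = 1} = card V \<and>
           2 * card {v \<in> V. lab v = 2} = card V \<and>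
           int (card V) \<le> 8 * int a ^ d - 6 \<and>
           (\<forall>D. partial_orientation E D \<and> (\<forall>u\<in>V. outdeg D u < d) \<longrightarrow>
              (\<exists>u\<in>V. \<exists>v\<in>V. lab u = 1 \<and> lab v = 2 \<and> dist_two E u v \<and>
                 (\<forall>x\<in>common_nbrs E u v. (u, x) \<notin> D \<and> (v, x) \<notin> D)))"
proof -
  have "2 * d \<le> a + 1"
    using assms(2) by linarith
  from balanced_construction_exists[OF assms(1) this]
  show ?thesis
    unfolding forces_free_pair_def free_pair_def by blast
qed

end
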